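(* Let $\mathfrak l$ be a Lie algebra and let $S_1,S_2$ be subspaces of $\mathfrak l$ with $[S_1,S_2]\subseteq S_1+S_2$. For $i=1,2$ let $\mathfrak s_i$ be the subalgebra of $\mathfrak l$ generated by $S_i$. Then $[\mathfrak s_1,\mathfrak s_2]\subseteq\mathfrak s_1+\mathfrak s_2$; in particular $\mathfrak s_1+\mathfrak s_2$ is a subalgebra of $\mathfrak l$. *)

theory Defs
  imports Complex_Main
begin

definition lie_algebra :: "('k::field \<Rightarrow> 'v::ab_group_add \<Rightarrow> 'v) \<Rightarrow> ('v \<Rightarrow> 'v \<Rightarrow> 'v) \<Rightarrow> bool" where
  "lie_algebra scale br \<longleftrightarrow>
     vector_space scale \<and>
     (\<forall>x y z. br (x + y) z = br x z + br y z) \<and>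
     (\<forall>x y z. br x (y + z) = br x y + br x z) \<and>
     (\<forall>c x y. br (scale c x) y = scale c (br x y)) \<and>
     (\<forall>c x y. br x (scale c y) = scale c (br x y)) \<and>
     (\<forall>x. br x x = 0) \<and>
     (\<forall>x y z. br x (br y z) + br y (br z x) + br z (br x y) = 0)"

definition lie_subalgebra :: "('k::field \<Rightarrow> 'v::ab_group_add \<Rightarrow> 'v) \<Rightarrow> ('v \<Rightarrow> 'v \<Rightarrow> 'v) \<Rightarrow> 'v set \<Rightarrow> bool" where
  "lie_subalgebra scale br A \<longleftrightarrow>
     module.subspace scale A \<and> (\<forall>x\<in>A. \<forall>y\<in>A. br x y \<in> A)"

definition gen_subalgebra :: "('k::field \<Rightarrow> 'v::ab_group_add \<Rightarrow> 'v) \<Rightarrow> ('v \<Rightarrow> 'v \<Rightarrow> 'v) \<Rightarrow> 'v set \<Rightarrow> 'v set" where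
  "gen_subalgebra scale br S = \<Inter>{A. lie_subalgebra scale br A \<and> S \<subseteq> A}"

definition bracket_set :: "('k::field \<Rightarrow> 'v::ab_group_add \<Rightarrow> 'v) \<Rightarrow> ('v \<Rightarrow> 'v \<Rightarrow> 'v) \<Rightarrow> 'v set \<Rightarrow> 'v set \<Rightarrow> 'v set" where
  "bracket_set scale br A B = module.span scale {br a b | a b. a \<in> A \<and> b \<in> B}"

definition set_plus :: "'v::ab_group_add set \<Rightarrow> 'v set \<Rightarrow> 'v set" where
  "set_plus A B = {a + b | a b. a \<in> A \<and> b \<in> B}"

end

theory Submission
  imports Defs
begin

text \<open>The elements x of s1 with [x, S2] \<subseteq> s1 + S2 form a subalgebra: for two such
  elements x, y we have [x, s1 + S2] \<subseteq> s1 + S2, so the Jacobi identity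
  [[x,y],z] = [x,[y,z]] - [y,[x,z]] puts [[x,y],z] into s1 + S2 for z \<in> S2. This subalgebra
  contains S1, hence it is s1. By antisymmetry [s1, S2] \<subseteq> s1 + S2 reads
  [S2, s1] \<subseteq> S2 + s1, and the same argument with the roles exchanged gives
  [s2, s1] \<subseteq> s2 + s1. Bilinearity then makes s1 + s2 closed under the bracket.\<close>

lemma set_plus_commute: "set_plus A B = set_plus B A"
  unfolding set_plus_def by (auto; metis add.commute)

lemma set_plus_mono: "A \<subseteq> A' \<Longrightarrow> B \<subseteq> B' \<Longrightarrow> set_plus A B \<subseteq> set_plus A' B'"
  unfolding set_plus_def by blast

lemma set_plus_memI: "a \<in> A \<Longrightarrow> b \<in> B \<Longrightarrow> a + b \<in> set_plus A B"
  unfolding set_plus_def by blast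

lemma set_plus_memE:
  assumes "w \<in> set_plus A B"
  obtains a b where "w = a + b" "a \<in> A" "b \<in> B"
  using assms unfolding set_plus_def by blast

context vector_space
begin

lemma subspace_set_plus:
  assumes A: "subspace A" and B: "subspace B"
  shows "subspace (set_plus A B)"
proof (rule subspaceI)
  show "0 \<in> set_plus A B"
    using set_plus_memI[of 0 A 0 B] subspace_0[OF A] subspace_0[OF B] by simp
next
  fix x y assume "x \<in> set_plus A B" "y \<in> set_plus A B"
  then obtain a b a' b' where "x = a + b" "a \<in> A" "b \<in> B" "y = a' + b'" "a' \<in> A" "b' \<in> B"
    by (meson set_plus_memE)
  then show "x + y \<in> set_plus A B"
    using set_plus_memI[of "a + a'" A "b + b'" B] subspace_add[OF A] subspace_add[OF B]
    by (simp add: algebra_simps)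
next
  fix c x assume "x \<in> set_plus A B"
  then obtain a b where "x = a + b" "a \<in> A" "b \<in> B"
    by (rule set_plus_memE)
  then show "scale c x \<in> set_plus A B"
    by (simp add: scale_right_distrib set_plus_memI subspace_scale A B)
qed

lemma set_plus_mem_left: "subspace B \<Longrightarrow> a \<in> A \<Longrightarrow> a \<in> set_plus A B"
  using set_plus_memI[of a A 0 B] subspace_0 by simp

lemma set_plus_mem_right: "subspace A \<Longrightarrow> b \<in> B \<Longrightarrow> b \<in> set_plus A B"
  using set_plus_memI[of 0 A b B] subspace_0 by simp

lemma bracket_set_subset_iff:
  assumes "subspace P"
  shows "bracket_set scale br A B \<subseteq> P \<longleftrightarrow> (\<forall>a\<in>A. \<forall>b\<in>B. br a b \<in> P)"
proof -
  have "span {br a b | a b. a \<in> A \<and> b \<in> B} \<subseteq> P \<longleftrightarrow> {br a b | a b. a \<in> A \<and> b \<in> B} \<subseteq> P"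
    using span_superset span_minimal[OF _ assms] by (meson order_trans)
  then show ?thesis
    unfolding bracket_set_def by blast
qed

lemma lie_subalgebra_gen_subalgebra: "lie_subalgebra scale br (gen_subalgebra scale br S)"
  unfolding lie_subalgebra_def gen_subalgebra_def
  by (auto intro!: subspace_Inter simp: lie_subalgebra_def)

lemma subspace_gen_subalgebra: "subspace (gen_subalgebra scale br S)"
  using lie_subalgebra_gen_subalgebra unfolding lie_subalgebra_def by blast

lemma gen_subalgebra_superset: "S \<subseteq> gen_subalgebra scale br S"
  unfolding gen_subalgebra_def by auto

lemma gen_subalgebra_minimal:
  "lie_subalgebra scale br A \<Longrightarrow> S \<subseteq> A \<Longrightarrow> gen_subalgebra scale br S \<subseteq> A"
  unfolding gen_subalgebra_def by auto

end

locale lie_alg =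
  fixes scale :: "'k::field \<Rightarrow> 'v::ab_group_add \<Rightarrow> 'v"
    and br :: "'v \<Rightarrow> 'v \<Rightarrow> 'v"
  assumes lie_algebra: "lie_algebra scale br"
begin

sublocale vector_space scale
  using lie_algebra by (simp add: lie_algebra_def)

lemma bracket_add_left: "br (x + y) z = br x z + br y z"
  and bracket_add_right: "br x (y + z) = br x y + br x z"
  and bracket_scale_left: "br (scale c x) y = scale c (br x y)"
  and bracket_self: "br x x = 0"
  and jacobi: "br x (br y z) + br y (br z x) + br z (br x y) = 0"
  using lie_algebra unfolding lie_algebra_def by blast+

lemma bracket_zero_left: "br 0 x = 0"
  using bracket_add_left[of 0 0 x] by simp

lemma bracket_zero_right: "br x 0 = 0"
  using bracket_add_right[of x 0 0] by simp

lemma bracket_neg_right: "br x (- y) = - br x y"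
  using bracket_add_right[of x y "- y"] bracket_zero_right by (simp add: eq_neg_iff_add_eq_0 add.commute)

lemma bracket_antisym: "br y x = - br x y"
  using bracket_self[of "x + y"] bracket_self[of x] bracket_self[of y]
  by (simp add: bracket_add_left bracket_add_right eq_neg_iff_add_eq_0 add.commute)

lemma bracket_bracket_left: "br (br x y) z = br x (br y z) - br y (br x z)"
proof -
  have "0 = br x (br y z) + br y (br z x) + br z (br x y)"
    using jacobi by simp
  also have "\<dots> = br x (br y z) - br y (br x z) - br (br x y) z"
    by (simp add: bracket_antisym[of x z] bracket_antisym[of "br x y" z] bracket_neg_right)
  finally show ?thesis
    by (simp add: algebra_simps)
qed

lemma bracket_swap_mem: "subspace P \<Longrightarrow> br y x \<in> P \<longleftrightarrow> br x y \<in> P"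
  using subspace_neg bracket_antisym by (metis minus_minus)

lemma lie_subalgebra_bracket_into_sum:
  assumes A: "lie_subalgebra scale br A" and B: "subspace B"
  shows "lie_subalgebra scale br {x \<in> A. \<forall>z\<in>B. br x z \<in> set_plus A B}"
proof -
  define P where "P = set_plus A B"
  define T where "T = {x \<in> A. \<forall>z\<in>B. br x z \<in> P}"
  have A_subspace: "subspace A" and A_bracket: "\<And>x y. x \<in> A \<Longrightarrow> y \<in> A \<Longrightarrow> br x y \<in> A"
    using A unfolding lie_subalgebra_def by blast+
  have P: "subspace P"
    unfolding P_def using A_subspace B by (rule subspace_set_plus)
  have bracket_into_P: "br x w \<in> P" if x: "x \<in> T" and w: "w \<in> P" for x w
  proof -
    obtain a b where ab: "w = a + b" "a \<in> A" "b \<in> B"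
      using w unfolding P_def by (rule set_plus_memE)
    have "br x a \<in> P"
      using x ab(2) A_bracket set_plus_mem_left[OF B] unfolding T_def P_def by blast
    moreover have "br x b \<in> P"
      using x ab(3) unfolding T_def by blast
    ultimately show ?thesis
      using ab(1) subspace_add[OF P] by (simp add: bracket_add_right)
  qed
  have "subspace T"
  proof (rule subspaceI)
    show "0 \<in> T"
      unfolding T_def by (simp add: subspace_0 A_subspace P bracket_zero_left)
  next
    fix x y assume "x \<in> T" "y \<in> T"
    then show "x + y \<in> T"
      unfolding T_def by (simp add: subspace_add A_subspace P bracket_add_left)
  next
    fix c x assume "x \<in> T"
    then show "scale c x \<in> T"
      unfolding T_def by (simp add: subspace_scale A_subspace P bracket_scale_left)
  qed
  moreover have "br x y \<in> T" if x: "x \<in> T" and y: "y \<in> T" for x y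
  proof -
    have "br (br x y) z \<in> P" if "z \<in> B" for z
    proof -
      have "br y z \<in> P" and "br x z \<in> P"
        using x y \<open>z \<in> B\<close> unfolding T_def by blast+
      then have "br x (br y z) - br y (br x z) \<in> P"
        using bracket_into_P[OF x] bracket_into_P[OF y] subspace_diff[OF P] by blast
      then show ?thesis
        by (simp add: bracket_bracket_left)
    qed
    moreover have "br x y \<in> A"
      using x y A_bracket unfolding T_def by blast
    ultimately show ?thesis
      unfolding T_def by blast
  qed
  ultimately show ?thesis
    unfolding lie_subalgebra_def T_def P_def by blast
qed

lemma gen_subalgebra_bracket_into_sum:
  assumes B: "subspace B" and generators: "\<forall>x\<in>S. \<forall>z\<in>B. br x z \<in> set_plus S B"
  shows "\<forall>x\<in>gen_subalgebra scale br S. \<forall>z\<in>B. br x z \<in> set_plus (gen_subalgebra scale br S) B"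
proof -
  have "set_plus S B \<subseteq> set_plus (gen_subalgebra scale br S) B"
    by (rule set_plus_mono[OF gen_subalgebra_superset order_refl])
  then have "S \<subseteq> {x \<in> gen_subalgebra scale br S. \<forall>z\<in>B. br x z \<in> set_plus (gen_subalgebra scale br S) B}"
    using generators gen_subalgebra_superset by blast
  then have "gen_subalgebra scale br S
      \<subseteq> {x \<in> gen_subalgebra scale br S. \<forall>z\<in>B. br x z \<in> set_plus (gen_subalgebra scale br S) B}"
    by (rule gen_subalgebra_minimal[OF lie_subalgebra_bracket_into_sum[OF lie_subalgebra_gen_subalgebra B]])
  then show ?thesis
    by blast
qed

lemma bracket_into_sum_swap:
  assumes "subspace A" and "subspace B"
  shows "(\<forall>x\<in>A. \<forall>y\<in>B. br x y \<in> set_plus A B) \<longleftrightarrow> (\<forall>y\<in>B. \<forall>x\<in>A. br y x \<in> set_plus B A)"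
  using bracket_swap_mem[OF subspace_set_plus[OF assms]] unfolding set_plus_commute[of B A] by blast

lemma lie_subalgebra_set_plus:
  assumes A: "lie_subalgebra scale br A" and B: "lie_subalgebra scale br B"
    and mixed: "\<forall>a\<in>A. \<forall>b\<in>B. br a b \<in> set_plus A B"
  shows "lie_subalgebra scale br (set_plus A B)"
proof -
  have A_subspace: "subspace A" and B_subspace: "subspace B"
    using A B unfolding lie_subalgebra_def by blast+
  have P: "subspace (set_plus A B)"
    using A_subspace B_subspace by (rule subspace_set_plus)
  have "br u v \<in> set_plus A B" if u: "u \<in> set_plus A B" and v: "v \<in> set_plus A B" for u v
  proof -
    obtain a b where ab: "u = a + b" "a \<in> A" "b \<in> B"
      using u by (rule set_plus_memE)
    obtain a' b' where ab': "v = a' + b'" "a' \<in> A" "b' \<in> B"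
      using v by (rule set_plus_memE)
    have "br a a' \<in> set_plus A B"
      using A ab(2) ab'(2) set_plus_mem_left[OF B_subspace] unfolding lie_subalgebra_def by blast
    moreover have "br b b' \<in> set_plus A B"
      using B ab(3) ab'(3) set_plus_mem_right[OF A_subspace] unfolding lie_subalgebra_def by blast
    moreover have "br a b' \<in> set_plus A B"
      using mixed ab(2) ab'(3) by blast
    moreover have "br b a' \<in> set_plus A B"
      using mixed ab(3) ab'(2) bracket_swap_mem[OF P, of b a'] by blast
    ultimately show ?thesis
      using ab(1) ab'(1) subspace_add[OF P] by (simp add: bracket_add_left bracket_add_right)
  qed
  with P show ?thesis
    unfolding lie_subalgebra_def by blast
qed

end

theorem lemma1p4:
  fixes scale :: "'k::field \<Rightarrow> 'v::ab_group_add \<Rightarrow> 'v"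
    and br :: "'v \<Rightarrow> 'v \<Rightarrow> 'v"
    and S1 S2 :: "'v set"
  assumes "lie_algebra scale br"
    and "module.subspace scale S1"
    and "module.subspace scale S2"
    and "bracket_set scale br S1 S2 \<subseteq> set_plus S1 S2"
  shows "bracket_set scale br (gen_subalgebra scale br S1) (gen_subalgebra scale br S2)
           \<subseteq> set_plus (gen_subalgebra scale br S1) (gen_subalgebra scale br S2)
         \<and> lie_subalgebra scale br (set_plus (gen_subalgebra scale br S1) (gen_subalgebra scale br S2))"
proof -
  interpret lie_alg scale br by standard (rule assms(1))
  define s1 where "s1 = gen_subalgebra scale br S1"
  define s2 where "s2 = gen_subalgebra scale br S2"
  have s1: "subspace s1" and s2: "subspace s2"
    unfolding s1_def s2_def by (rule subspace_gen_subalgebra)+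
  have "\<forall>x\<in>S1. \<forall>z\<in>S2. br x z \<in> set_plus S1 S2"
    by (rule iffD1[OF bracket_set_subset_iff[OF subspace_set_plus[OF assms(2,3)]] assms(4)])
  then have "\<forall>x\<in>s1. \<forall>z\<in>S2. br x z \<in> set_plus s1 S2"
    unfolding s1_def by (rule gen_subalgebra_bracket_into_sum[OF assms(3)])
  then have "\<forall>z\<in>S2. \<forall>x\<in>s1. br z x \<in> set_plus S2 s1"
    by (rule iffD1[OF bracket_into_sum_swap[OF s1 assms(3)]])
  then have "\<forall>z\<in>s2. \<forall>x\<in>s1. br z x \<in> set_plus s2 s1"
    unfolding s2_def by (rule gen_subalgebra_bracket_into_sum[OF s1])
  then have mixed: "\<forall>x\<in>s1. \<forall>z\<in>s2. br x z \<in> set_plus s1 s2"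
    by (rule iffD2[OF bracket_into_sum_swap[OF s1 s2]])
  have "bracket_set scale br s1 s2 \<subseteq> set_plus s1 s2"
    using mixed bracket_set_subset_iff[OF subspace_set_plus[OF s1 s2]] by blast
  moreover have "lie_subalgebra scale br (set_plus s1 s2)"
    using lie_subalgebra_set_plus[OF lie_subalgebra_gen_subalgebra lie_subalgebra_gen_subalgebra]
      mixed unfolding s1_def s2_def by blast
  ultimately show ?thesis
    unfolding s1_def s2_def by blast
qed

end
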